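(* Fix an integer $n\ge1$. Then $x\mapsto\psi(x;n)$ is non-decreasing on $\mathbb Z_{\ge0}$; for all $x\in\mathbb Z_{\ge0}$ one has $\mathfrak p^n_1(x,x+1)\ge\frac12\ge\mathfrak p^n_1(x,x-1)$; and $x\mapsto\mathfrak p^n_1(x,x+1)$ is non-increasing while $x\mapsto\mathfrak p^n_1(x,x-1)$ is non-decreasing.
   Context: Let $p_n(w)$ be the probability that simple symmetric random walk on $\mathbb Z$ started at $0$ is at $w$ at time $n$. For $x,y\in\mathbb Z_{\ge0}$ set $p^{(1/2)}_n(x,y)=p_n(x-y)-p_n(x+y+2)$ (and $p^{(1/2)}_n(x,-1)=0$), $\psi(x;n)=\sum_{y\ge0}p^{(1/2)}_n(x,y)$, and for $0\le n\le N$, $\mathfrak p^N_n(x,y)=p^{(1/2)}_n(x,y)\,\psi(y;N-n)/\psi(x;N)$. Thus $\mathfrak p^n_1(x,x\pm1)$ are the one-step transition probabilities at time $0$ of simple random walk of length $n$ conditioned to stay non-negative. *)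

theory Defs
  imports Complex_Main
begin

fun srw_p :: "nat \<Rightarrow> int \<Rightarrow> real" where
  "srw_p 0 w = (if w = 0 then 1 else 0)"
| "srw_p (Suc n) w = (srw_p n (w - 1) + srw_p n (w + 1)) / 2"

text \<open>Killed (reflected at -1) kernel p^(1/2)_n(x,y) = p_n(x-y) - p_n(x+y+2), with the
  convention p^(1/2)_n(x,-1) = 0.\<close>
definition p_half :: "nat \<Rightarrow> int \<Rightarrow> int \<Rightarrow> real" where
  "p_half n x y = (if y = -1 then 0 else srw_p n (x - y) - srw_p n (x + y + 2))"

definition psi :: "int \<Rightarrow> nat \<Rightarrow> real" where
  "psi x n = (\<Sum>y::nat. p_half n x (int y))"

text \<open>Transition kernel of the walk of length N conditioned to stay non-negative.\<close>
definition frakp :: "nat \<Rightarrow> nat \<Rightarrow> int \<Rightarrow> int \<Rightarrow> real" where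
  "frakp N n x y = p_half n x y * psi y (N - n) / psi x N"

end

theory Submission
  imports Defs
begin

text \<open>For \<open>x \<ge> 0\<close>, \<open>\<psi>(x; m+1)\<close> is the average of \<open>\<psi>(x-1; m)\<close> and \<open>\<psi>(x+1; m)\<close>, while
  \<open>\<psi>(-1; m) = 0\<close> and \<open>\<psi>(x; 0) = 1\<close>. Averaging preserves being non-decreasing and concave
  on \<open>x \<ge> -1\<close>, so every \<open>\<psi>(\<cdot>; m)\<close> has this shape. One step of the conditioned walk
  goes up with probability \<open>\<psi>(x+1)/(\<psi>(x-1) + \<psi>(x+1)) = 1/(1 + r x)\<close>, where
  \<open>r x = \<psi>(x-1)/\<psi>(x+1) \<in> [0,1]\<close>; concavity together with \<open>\<psi>(-1) = 0\<close> gives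
  \<open>\<psi>(x-1) \<psi>(x+2) \<le> \<psi>(x) \<psi>(x+1)\<close>, i.e. \<open>r\<close> is non-decreasing.\<close>

lemma int_mono_from_steps:
  fixes f :: "int \<Rightarrow> 'a::order"
  assumes unit_step: "\<And>x. a \<le> x \<Longrightarrow> f x \<le> f (x + 1)" and "a \<le> x" "x \<le> y"
  shows "f x \<le> f y"
  using \<open>x \<le> y\<close>
proof (induction rule: int_ge_induct)
  case (step y)
  then show ?case using unit_step[of y] \<open>a \<le> x\<close> order_trans by fastforce
qed simp

definition nondecr_concave_from :: "int \<Rightarrow> (int \<Rightarrow> real) \<Rightarrow> bool" where
  "nondecr_concave_from a f \<longleftrightarrow>
     (\<forall>x\<ge>a. f x \<le> f (x + 1) \<and> f (x + 2) - f (x + 1) \<le> f (x + 1) - f x)"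

lemma nondecr_concave_fromD:
  assumes "nondecr_concave_from a f" "a \<le> x"
  shows "f x \<le> f (x + 1)" "f (x + 2) - f (x + 1) \<le> f (x + 1) - f x"
  using assms unfolding nondecr_concave_from_def by auto

lemma nondecr_concave_from_mono:
  assumes "nondecr_concave_from a f" "a \<le> x" "x \<le> y"
  shows "f x \<le> f y"
  using int_mono_from_steps[of a f x y] nondecr_concave_fromD(1)[OF assms(1)] assms(2,3)
  by blast

lemma nondecr_concave_from_product:
  assumes f: "nondecr_concave_from a f" and "0 \<le> f a" "a \<le> x"
  shows "f x * f (x + 3) \<le> f (x + 1) * f (x + 2)"
proof -
  have "f x \<le> f (x + 1)" "f (x + 1) \<le> f (x + 2)"
    "f (x + 3) - f (x + 2) \<le> f (x + 1) - f x"
    using nondecr_concave_fromD[OF f, of x] nondecr_concave_fromD[OF f, of "x + 1"] \<open>a \<le> x\<close>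
    by (simp_all add: add.assoc)
  moreover have "0 \<le> f x"
    using nondecr_concave_from_mono[OF f order_refl \<open>a \<le> x\<close>] \<open>0 \<le> f a\<close> by linarith
  ultimately have "0 \<le> f x * ((f (x + 1) - f x) - (f (x + 3) - f (x + 2)))
      + (f (x + 1) - f x) * (f (x + 2) - f x)"
    by (intro add_nonneg_nonneg mult_nonneg_nonneg) simp_all
  then show ?thesis by (simp add: algebra_simps)
qed

text \<open>The boundary value \<open>g (-1) = 0 = f (-1)\<close> acts as an odd reflection at \<open>-1\<close>,
  which is what keeps concavity at the left end.\<close>

lemma nondecr_concave_from_average:
  assumes f: "nondecr_concave_from (-1) f" and "f (-1) = 0" "g (-1) = 0"
    and g: "\<And>x. 0 \<le> x \<Longrightarrow> g x = (f (x - 1) + f (x + 1)) / 2"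
  shows "nondecr_concave_from (-1) g"
  unfolding nondecr_concave_from_def
proof (intro allI impI)
  fix x :: int assume "-1 \<le> x"
  then consider "x = -1" | "0 \<le> x" by linarith
  then show "g x \<le> g (x + 1) \<and> g (x + 2) - g (x + 1) \<le> g (x + 1) - g x"
  proof cases
    case 1
    have "f (-1) \<le> f 0" "f 0 \<le> f 1" "f 2 - f 1 \<le> f 1 - f 0"
      using nondecr_concave_fromD[OF f, of "-1"] nondecr_concave_fromD[OF f, of 0] by simp_all
    then show ?thesis using 1 g[of 0] g[of 1] assms(2,3) by simp
  next
    case 2
    have "f (x - 1) \<le> f x" "f (x + 1) \<le> f (x + 2)"
      "f (x + 1) - f x \<le> f x - f (x - 1)" "f (x + 3) - f (x + 2) \<le> f (x + 2) - f (x + 1)"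
      using nondecr_concave_fromD[OF f, of "x - 1"] nondecr_concave_fromD[OF f, of "x + 1"] 2
      by (simp_all add: algebra_simps)
    moreover have "g (x + 1) = (f x + f (x + 2)) / 2" "g (x + 2) = (f (x + 1) + f (x + 3)) / 2"
      using g[of "x + 1"] g[of "x + 2"] 2 by (simp_all add: algebra_simps)
    ultimately show ?thesis using g[OF 2] by simp
  qed
qed

lemma srw_p_uminus: "srw_p n (- w) = srw_p n w"
proof (induction n arbitrary: w)
  case (Suc n)
  then show ?case using Suc[of "w + 1"] Suc[of "w - 1"] by simp
qed simp

lemma srw_p_eq_0: "int n < \<bar>w\<bar> \<Longrightarrow> srw_p n w = 0"
  by (induction n arbitrary: w) auto

lemma p_half_eq_0: "\<bar>x\<bar> + int n < y \<Longrightarrow> p_half n x y = 0"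
  unfolding p_half_def by (simp add: srw_p_eq_0)

lemma psi_sums: "(\<lambda>y. p_half n x (int y)) sums psi x n"
proof -
  have "(\<lambda>y. p_half n x (int y)) sums (\<Sum>y\<le>nat (\<bar>x\<bar> + int n). p_half n x (int y))"
    by (rule sums_finite) (auto intro!: p_half_eq_0)
  then show ?thesis unfolding psi_def by (simp add: sums_iff)
qed

lemma psi_Suc: "psi x (Suc n) = (psi (x - 1) n + psi (x + 1) n) / 2"
proof -
  have "(\<lambda>y. p_half (Suc n) x (int y))
      = (\<lambda>y. (p_half n (x - 1) (int y) + p_half n (x + 1) (int y)) / 2)"
    unfolding p_half_def by (simp add: algebra_simps add_divide_distrib diff_divide_distrib)
  then have "(\<lambda>y. p_half (Suc n) x (int y)) sums ((psi (x - 1) n + psi (x + 1) n) / 2)"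
    by (simp only:) (intro sums_divide sums_add psi_sums)
  then show ?thesis using psi_sums sums_unique2 by blast
qed

lemma psi_minus_one: "psi (-1) n = 0"
proof -
  have "p_half n (-1) (int y) = 0" for y
    using srw_p_uminus[of n "int y + 1"] unfolding p_half_def by (simp add: algebra_simps)
  then show ?thesis unfolding psi_def by simp
qed

lemma psi_0: "0 \<le> x \<Longrightarrow> psi x 0 = 1"
proof -
  assume "0 \<le> x"
  then have "p_half 0 x (int y) = (if y = nat x then 1 else 0)" for y
    unfolding p_half_def by auto
  then have "(\<lambda>y. p_half 0 x (int y)) sums 1"
    using sums_single[of "nat x" "\<lambda>_. 1::real"] by simp
  then show ?thesis using psi_sums sums_unique2 by blast
qed

lemma psi_nondecr_concave: "nondecr_concave_from (-1) (\<lambda>x. psi x m)"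
proof (induction m)
  case 0
  have "psi x 0 = (if 0 \<le> x then 1 else 0)" if "-1 \<le> x" for x
    using that psi_0 psi_minus_one by (cases "x = -1") auto
  then show ?case unfolding nondecr_concave_from_def by simp
next
  case (Suc m)
  show ?case
    by (rule nondecr_concave_from_average[where g = "\<lambda>x. psi x (Suc m)",
          OF Suc psi_minus_one psi_minus_one]) (rule psi_Suc)
qed

lemma psi_mono: "-1 \<le> x \<Longrightarrow> x \<le> y \<Longrightarrow> psi x m \<le> psi y m"
  by (rule nondecr_concave_from_mono[OF psi_nondecr_concave])

lemma psi_nonneg: "-1 \<le> x \<Longrightarrow> 0 \<le> psi x m"
  using psi_mono[of "-1" x m] psi_minus_one[of m] by simp

lemma psi_pos: "0 \<le> x \<Longrightarrow> 0 < psi x m"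
proof (induction m arbitrary: x)
  case (Suc m)
  have "0 < psi (x + 1) m" using Suc by simp
  then show ?case using psi_nonneg[of "x - 1" m] Suc.prems by (simp add: psi_Suc)
qed (simp add: psi_0)

definition psi_ratio :: "nat \<Rightarrow> int \<Rightarrow> real" where
  "psi_ratio m x = psi (x - 1) m / psi (x + 1) m"

lemma psi_ratio_mono:
  assumes "0 \<le> x" "x \<le> y"
  shows "psi_ratio m x \<le> psi_ratio m y"
proof (rule int_mono_from_steps[OF _ assms])
  fix z :: int assume "0 \<le> z"
  then have "psi (z - 1) m * psi (z + 2) m \<le> psi z m * psi (z + 1) m"
    using nondecr_concave_from_product[OF psi_nondecr_concave, where x = "z - 1"] psi_minus_one
    by (simp add: algebra_simps)
  moreover have "0 < psi (z + 1) m" "0 < psi (z + 2) m" using \<open>0 \<le> z\<close> by (simp_all add: psi_pos)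
  ultimately show "psi_ratio m z \<le> psi_ratio m (z + 1)"
    unfolding psi_ratio_def by (simp add: divide_simps mult.commute add.assoc)
qed

lemma psi_ratio_bounds: "0 \<le> x \<Longrightarrow> 0 \<le> psi_ratio m x \<and> psi_ratio m x \<le> 1"
  unfolding psi_ratio_def using psi_mono[of "x - 1" "x + 1" m] psi_nonneg[of "x - 1" m]
    psi_pos[of "x + 1" m] by simp

lemma frakp_step_up:
  assumes "0 \<le> x"
  shows "frakp (Suc m) 1 x (x + 1) = 1 / (1 + psi_ratio m x)"
proof -
  have "p_half 1 x (x + 1) = 1 / 2" unfolding p_half_def using assms by simp
  then show ?thesis unfolding frakp_def psi_ratio_def psi_Suc
    using psi_nonneg[of "x - 1" m] psi_pos[of "x + 1" m] assms by (simp add: field_simps)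
qed

lemma frakp_step_down:
  assumes "0 \<le> x"
  shows "frakp (Suc m) 1 x (x - 1) = psi_ratio m x / (1 + psi_ratio m x)"
proof -
  have "p_half 1 x (x - 1) * psi (x - 1) m = psi (x - 1) m / 2"
    using assms psi_minus_one[of m] unfolding p_half_def by (cases "x = 0") simp_all
  then show ?thesis unfolding frakp_def psi_ratio_def psi_Suc diff_Suc_1
    using psi_nonneg[of "x - 1" m] psi_pos[of "x + 1" m] assms by (simp add: field_simps)
qed

theorem lemmaA4:
  fixes n :: nat
  assumes "n \<ge> 1"
  shows "(\<forall>x y :: int. 0 \<le> x \<longrightarrow> x \<le> y \<longrightarrow> psi x n \<le> psi y n)
       \<and> (\<forall>x :: int. 0 \<le> x \<longrightarrow> frakp n 1 x (x + 1) \<ge> 1/2 \<and> 1/2 \<ge> frakp n 1 x (x - 1))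
       \<and> (\<forall>x y :: int. 0 \<le> x \<longrightarrow> x \<le> y \<longrightarrow> frakp n 1 y (y + 1) \<le> frakp n 1 x (x + 1))
       \<and> (\<forall>x y :: int. 0 \<le> x \<longrightarrow> x \<le> y \<longrightarrow> frakp n 1 x (x - 1) \<le> frakp n 1 y (y - 1))"
proof -
  obtain m where n: "n = Suc m" using assms by (cases n) auto
  have half: "frakp n 1 x (x + 1) \<ge> 1/2 \<and> 1/2 \<ge> frakp n 1 x (x - 1)" if "0 \<le> x" for x
    using psi_ratio_bounds[OF that, of m]
    unfolding n frakp_step_up[OF that] frakp_step_down[OF that] by (simp add: field_simps)
  have monotone: "frakp n 1 y (y + 1) \<le> frakp n 1 x (x + 1)
      \<and> frakp n 1 x (x - 1) \<le> frakp n 1 y (y - 1)" if "0 \<le> x" "x \<le> y" for x y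
  proof -
    have "0 \<le> y" using that by simp
    then show ?thesis
      using psi_ratio_bounds[OF that(1), of m] psi_ratio_mono[OF that, of m]
      unfolding n frakp_step_up[OF that(1)] frakp_step_down[OF that(1)]
        frakp_step_up[OF \<open>0 \<le> y\<close>] frakp_step_down[OF \<open>0 \<le> y\<close>]
      by (simp add: field_simps)
  qed
  show ?thesis using psi_mono half monotone by simp
qed

end
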